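(* Let $n\ge2$, $l\ge1$, $s\in\{+1,-1\}$ and $i_2,\dots,i_{2l}\in\{0,1\}$ with $0i_2\cdots i_l=i_{l+1}\cdots i_{2l}$ or $0i_2\cdots i_l=\bar i_{l+1}\cdots\bar i_{2l}$. Let $$|\mathscr{G}\rangle=\tfrac{1}{\sqrt2}\Big(|0\rangle\textstyle\bigotimes_{k=2}^{2l}|i_k\rangle+s\,|1\rangle\bigotimes_{k=2}^{2l}|\bar i_k\rangle\Big)$$ and consider $n$ identical copies $|\mathscr{G}\rangle^{\otimes n}$. Perform a projective measurement in the GHZ basis (Bell basis when $n=2$, $l=1$) on the first $l$ qubits of each copy (ordered by copy), and let $|\mathcal{G}_a\rangle$ be the outcome and $|\mathcal{G}_b\rangle$ the state into which the remaining qubits (the last $l$ qubits of each copy, ordered by copy) collapse. If $s=+1$, then $|\mathcal{G}_a\rangle$ and $|\mathcal{G}_b\rangle$ are the same. If $s=-1$, then they are the same when $n$ is even and different when $n$ is odd.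
   Context: For a bit $b$, $\bar b=1-b$. For $N\ge 2$ qubits, the GHZ basis is the orthonormal basis $\frac{1}{\sqrt2}\big(|0\,b_2\cdots b_N\rangle\pm|1\,\bar b_2\cdots\bar b_N\rangle\big)$, $b_k\in\{0,1\}$; for $N=2$ it is the Bell basis. "Same" means equal as quantum states (up to a global phase). *)

theory Defs
  imports Complex_Main
begin

text \<open>States of m qubits are amplitude functions on bit strings (bool lists,
False = 0, True = 1); only strings of length m are relevant.\<close>

definition ket :: "bool list \<Rightarrow> bool list \<Rightarrow> complex" where
  "ket w = (\<lambda>v. if v = w then 1 else 0)"

definition ghz_basis :: "nat \<Rightarrow> (bool list \<Rightarrow> complex) set" where
  "ghz_basis m = {(\<lambda>v. (ket (False # b) v + \<sigma> * ket (True # map Not b) v) / complex_of_real (sqrt 2))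
                   | b \<sigma>. length b = m - 1 \<and> (\<sigma> = 1 \<or> \<sigma> = -1)}"

definition single_state :: "real \<Rightarrow> bool list \<Rightarrow> bool list \<Rightarrow> complex" where
  "single_state s is = (\<lambda>w. (ket (False # is) w + complex_of_real s * ket (True # map Not is) w)
                              / complex_of_real (sqrt 2))"

definition chunk :: "nat \<Rightarrow> nat \<Rightarrow> bool list \<Rightarrow> bool list" where
  "chunk l k u = take l (drop (k * l) u)"

text \<open>Amplitude of the n-fold tensor power, with the register A (first l qubits of each
copy, ordered by copy) given by u and register B (last l qubits of each copy, ordered by copy)
given by v.\<close>
definition joint_state :: "nat \<Rightarrow> nat \<Rightarrow> real \<Rightarrow> bool list \<Rightarrow> bool list \<Rightarrow> bool list \<Rightarrow> complex" where
  "joint_state n l s is u v =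
     (if length u = n * l \<and> length v = n * l
      then (\<Prod>k<n. single_state s is (chunk l k u @ chunk l k v)) else 0)"

definition post_state :: "nat \<Rightarrow> nat \<Rightarrow> real \<Rightarrow> bool list \<Rightarrow> (bool list \<Rightarrow> complex) \<Rightarrow> bool list \<Rightarrow> complex" where
  "post_state n l s is g v = (\<Sum>u\<in>{u. length u = n * l}. cnj (g u) * joint_state n l s is u v)"

definition outcome_prob :: "nat \<Rightarrow> nat \<Rightarrow> real \<Rightarrow> bool list \<Rightarrow> (bool list \<Rightarrow> complex) \<Rightarrow> real" where
  "outcome_prob n l s is g = (\<Sum>v\<in>{v. length v = n * l}. (cmod (post_state n l s is g v))\<^sup>2)"

definition collapsed_state :: "nat \<Rightarrow> nat \<Rightarrow> real \<Rightarrow> bool list \<Rightarrow> (bool list \<Rightarrow> complex) \<Rightarrow> bool list \<Rightarrow> complex" where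
  "collapsed_state n l s is g = (\<lambda>v. post_state n l s is g v / complex_of_real (sqrt (outcome_prob n l s is g)))"

definition same_state :: "(bool list \<Rightarrow> complex) \<Rightarrow> (bool list \<Rightarrow> complex) \<Rightarrow> bool" where
  "same_state \<phi> \<psi> \<longleftrightarrow> (\<exists>c. cmod c = 1 \<and> \<phi> = (\<lambda>v. c * \<psi> v))"

end

theory Submission
  imports Defs
begin

text \<open>Each copy is supported on the string \<open>x = 0 i\<^sub>2 \<dots> i\<^sub>2\<^sub>l\<close> and its complement, and
by the hypothesis on the \<open>i\<^sub>k\<close> in both strings the second half is the first half, complemented
or not according to one fixed pattern \<open>f\<close>.  So in the \<open>n\<close>-fold power register B is the image of
register A under \<open>f\<close>, and complementing register A multiplies the amplitude by \<open>s\<^sup>n\<close>.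
Projecting A onto the GHZ vector \<open>|w> + \<sigma> |not w>\<close> therefore leaves B, up to a phase, in
\<open>|w> + \<sigma> s\<^sup>n |not w>\<close>, which is the outcome state exactly when \<open>s\<^sup>n = 1\<close>.\<close>

definition flip_if :: "bool \<Rightarrow> bool list \<Rightarrow> bool list" where
  "flip_if f p = (if f then map Not p else p)"

lemma length_flip_if [simp]: "length (flip_if f p) = length p"
  by (simp add: flip_if_def)

lemma flip_if_map_Not: "flip_if f (map Not p) = map Not (flip_if f p)"
  by (simp add: flip_if_def)

lemma Not_comp_Not [simp]: "Not \<circ> Not = id"
  by auto

lemma map_Not_map_Not: "map Not (map Not p) = p"
  by simp

lemma map_Not_neq: "p \<noteq> [] \<Longrightarrow> map Not p \<noteq> p"
  by (cases p) auto

lemma ket_map_Not: "ket w (map Not v) = ket (map Not w) v"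
  unfolding ket_def by (metis map_Not_map_Not)

lemma sum_ket_mult:
  assumes "finite A" "w \<in> A"
  shows "(\<Sum>u\<in>A. ket w u * h u) = h w"
proof -
  have "(\<Sum>u\<in>A. ket w u * h u) = (\<Sum>u\<in>A. if u = w then h u else 0)"
    by (rule sum.cong) (auto simp: ket_def)
  then show ?thesis using assms by simp
qed

lemma chunk_map: "chunk l k (map h u) = map h (chunk l k u)"
  by (simp add: chunk_def take_map drop_map)

lemma chunk_flip_if: "chunk l k (flip_if f u) = flip_if f (chunk l k u)"
  by (simp add: flip_if_def chunk_map)

lemma length_chunk:
  assumes "length u = n * l" "k < n"
  shows "length (chunk l k u) = l"
proof -
  have "(k + 1) * l \<le> n * l" using assms(2) by (intro mult_right_mono) auto
  then show ?thesis using assms by (simp add: chunk_def algebra_simps)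
qed

lemma list_eq_chunks:
  assumes "length u = n * l" "length v = n * l" "\<forall>k<n. chunk l k u = chunk l k v"
  shows "u = v"
proof (rule nth_equalityI)
  show "length u = length v" using assms by simp
next
  fix i assume i: "i < length u"
  then have "l > 0" using assms(1) by (cases l) auto
  define k j where "k = i div l" and "j = i mod l"
  have ij: "i = k * l + j" and jl: "j < l" and kn: "k < n"
    using i assms(1) \<open>l > 0\<close> by (auto simp: k_def j_def div_less_iff_less_mult)
  then have "k * l \<le> length u" "k * l \<le> length v" using i assms by linarith+
  then have "chunk l k u ! j = u ! i" "chunk l k v ! j = v ! i"
    using jl ij by (simp_all add: chunk_def)
  then show "u ! i = v ! i" using assms(3) kn by metis
qed

lemma single_state_map_Not:
  assumes "s * s = 1"
  shows "single_state s is (map Not v) = complex_of_real s * single_state s is v"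
proof -
  have "complex_of_real s * complex_of_real s = 1"
    by (metis assms of_real_1 of_real_mult)
  then have "complex_of_real s * (complex_of_real s * t) = t" for t
    by (metis mult.assoc mult_1)
  then show ?thesis
    unfolding single_state_def ket_map_Not
    by (simp add: add_divide_distrib distrib_left)
qed

lemma single_state_off_graph:
  assumes "drop l (False # is) = flip_if f (take l (False # is))"
    and "length p = l" and "q \<noteq> flip_if f p"
  shows "single_state s is (p @ q) = 0"
proof -
  have "p @ q \<noteq> False # is"
    using assms by (metis append_eq_conv_conj)
  moreover have "p @ q \<noteq> map Not (False # is)"
  proof
    assume "p @ q = map Not (False # is)"
    then have "p = take l (map Not (False # is))" "q = drop l (map Not (False # is))"
      using assms(2) by (metis append_eq_conv_conj)+
    then show False using assms by (simp add: flip_if_map_Not take_map drop_map del: list.map)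
  qed
  ultimately show ?thesis by (simp add: single_state_def ket_def)
qed

definition graph_amplitude :: "nat \<Rightarrow> nat \<Rightarrow> real \<Rightarrow> bool list \<Rightarrow> bool \<Rightarrow> bool list \<Rightarrow> complex" where
  "graph_amplitude n l s is f u = (\<Prod>k<n. single_state s is (chunk l k u @ flip_if f (chunk l k u)))"

lemma joint_state_eq_graph_amplitude:
  assumes fb: "drop l (False # is) = flip_if f (take l (False # is))"
    and u: "length u = n * l"
  shows "joint_state n l s is u v = (if v = flip_if f u then graph_amplitude n l s is f u else 0)"
proof (cases "v = flip_if f u \<or> length v \<noteq> n * l")
  case True
  then show ?thesis using u by (auto simp: joint_state_def graph_amplitude_def chunk_flip_if)
next
  case False
  then obtain k where k: "k < n" "chunk l k v \<noteq> flip_if f (chunk l k u)"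
    using list_eq_chunks[of v n l "flip_if f u"] u by (auto simp: chunk_flip_if)
  then have "single_state s is (chunk l k u @ chunk l k v) = 0"
    using single_state_off_graph[OF fb] length_chunk[OF u] by blast
  then have "(\<Prod>k<n. single_state s is (chunk l k u @ chunk l k v)) = 0"
    using k(1) by (intro prod_zero) auto
  then show ?thesis using False u by (simp add: joint_state_def)
qed

lemma graph_amplitude_map_Not:
  assumes "s * s = 1"
  shows "graph_amplitude n l s is f (map Not u) = complex_of_real s ^ n * graph_amplitude n l s is f u"
proof -
  have "single_state s is (map Not p @ map Not q) = complex_of_real s * single_state s is (p @ q)" for p q
    by (metis map_append single_state_map_Not[OF assms])
  then show ?thesis
    by (simp add: graph_amplitude_def chunk_map flip_if_map_Not prod.distrib)
qed

definition ghz_vec :: "bool list \<Rightarrow> complex \<Rightarrow> bool list \<Rightarrow> complex" where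
  "ghz_vec w \<tau> = (\<lambda>v. (ket w v + \<tau> * ket (map Not w) v) / complex_of_real (sqrt 2))"

lemma ghz_basisE:
  assumes "g \<in> ghz_basis m" "m > 0"
  obtains w \<sigma> where "g = ghz_vec w \<sigma>" "length w = m" "w \<noteq> []" "\<sigma> = 1 \<or> \<sigma> = -1"
proof -
  obtain b \<sigma> where "g = (\<lambda>v. (ket (False # b) v + \<sigma> * ket (True # map Not b) v) / complex_of_real (sqrt 2))"
    and "length b = m - 1" "\<sigma> = 1 \<or> \<sigma> = -1"
    using assms(1) unfolding ghz_basis_def by blast
  then show thesis
    using that[of "False # b" \<sigma>] assms(2) by (simp add: ghz_vec_def)
qed

lemma ghz_vec_map_Not:
  assumes "\<tau> * \<tau> = 1"
  shows "ghz_vec (map Not w) \<tau> = (\<lambda>v. \<tau> * ghz_vec w \<tau> v)"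
proof -
  have \<tau>\<tau>: "\<tau> * (\<tau> * t) = t" for t
    by (metis assms mult.assoc mult_1)
  show ?thesis
    unfolding ghz_vec_def by (simp add: add_divide_distrib distrib_left \<tau>\<tau> add.commute)
qed

lemma sum_norm_ghz_vec:
  assumes "length w = m" "w \<noteq> []" "cmod \<tau> = 1"
  shows "(\<Sum>v\<in>{v. length v = m}. (cmod (ghz_vec w \<tau> v))\<^sup>2) = 1"
proof -
  have "(cmod (ghz_vec w \<tau> v))\<^sup>2 = (if v = w then 1/2 else 0) + (if v = map Not w then 1/2 else 0)" for v
    using map_Not_neq[OF assms(2)] assms(3)
    by (auto simp: ghz_vec_def ket_def norm_divide power_divide)
  then show ?thesis
    using assms(1) by (simp add: sum.distrib finite_list_length)
qed

lemma same_state_phase_ghz_vec_iff: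
  assumes "w \<noteq> []" "cmod c = 1"
  shows "same_state (\<lambda>v. c * ghz_vec w \<tau> v) (ghz_vec w \<sigma>) \<longleftrightarrow> \<tau> = \<sigma>"
proof
  assume "same_state (\<lambda>v. c * ghz_vec w \<tau> v) (ghz_vec w \<sigma>)"
  then obtain c' where "(\<lambda>v. c * ghz_vec w \<tau> v) = (\<lambda>v. c' * ghz_vec w \<sigma> v)"
    unfolding same_state_def by blast
  then have "c * ghz_vec w \<tau> v = c' * ghz_vec w \<sigma> v" for v by metis
  from this[of w] this[of "map Not w"] show "\<tau> = \<sigma>"
    using map_Not_neq[OF assms(1)] assms(2) by (auto simp: ghz_vec_def ket_def)
qed (use assms in \<open>auto simp: same_state_def\<close>)

lemma post_state_ghz_vec:
  assumes "length w = n * l"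
  shows "post_state n l s is (ghz_vec w \<sigma>) v
           = (joint_state n l s is w v + cnj \<sigma> * joint_state n l s is (map Not w) v)
             / complex_of_real (sqrt 2)"
proof -
  have "cnj (ghz_vec w \<sigma> u) = (ket w u + cnj \<sigma> * ket (map Not w) u) / complex_of_real (sqrt 2)" for u
    by (simp add: ghz_vec_def ket_def)
  then have "post_state n l s is (ghz_vec w \<sigma>) v
      = ((\<Sum>u | length u = n * l. ket w u * joint_state n l s is u v)
         + cnj \<sigma> * (\<Sum>u | length u = n * l. ket (map Not w) u * joint_state n l s is u v))
        / complex_of_real (sqrt 2)"
    unfolding post_state_def
    by (simp add: sum_divide_distrib[symmetric] sum.distrib distrib_right sum_distrib_left mult.assoc)
  then show ?thesis
    using assms by (simp add: sum_ket_mult finite_list_length)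
qed

lemma post_state_ghz_vec_multiple:
  assumes fb: "drop l (False # is) = flip_if f (take l (False # is))"
    and "s * s = 1" and "length w = n * l" and "\<sigma> = 1 \<or> \<sigma> = -1"
  obtains K where "post_state n l s is (ghz_vec w \<sigma>) = (\<lambda>v. K * ghz_vec w (\<sigma> * complex_of_real s ^ n) v)"
proof -
  define \<tau> where "\<tau> = \<sigma> * complex_of_real s ^ n"
  define P where "P = graph_amplitude n l s is f w"
  have "complex_of_real s * complex_of_real s = 1"
    by (metis assms(2) of_real_1 of_real_mult)
  then have "\<tau> * \<tau> = 1"
    using assms(4) by (auto simp: \<tau>_def algebra_simps power_mult_distrib[symmetric])
  have "cnj \<sigma> = \<sigma>" using assms(4) by auto
  then have "post_state n l s is (ghz_vec w \<sigma>) v = P * ghz_vec (flip_if f w) \<tau> v" for v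
    unfolding post_state_ghz_vec[OF assms(3)] using assms(3)
    by (simp add: joint_state_eq_graph_amplitude[OF fb]
        graph_amplitude_map_Not[OF assms(2)] flip_if_map_Not ghz_vec_def ket_def P_def \<tau>_def
        algebra_simps)
  then have "post_state n l s is (ghz_vec w \<sigma>) = (\<lambda>v. P * ghz_vec (flip_if f w) \<tau> v)"
    by blast
  moreover have "ghz_vec (flip_if f w) \<tau> = (\<lambda>v. (if f then \<tau> else 1) * ghz_vec w \<tau> v)"
    using ghz_vec_map_Not[OF \<open>\<tau> * \<tau> = 1\<close>] by (simp add: flip_if_def)
  ultimately show ?thesis
    using that unfolding \<tau>_def by (metis mult.assoc)
qed

lemma collapsed_state_of_multiple:
  assumes post: "post_state n l s is g = (\<lambda>v. K * ghz_vec w \<tau> v)"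
    and "length w = n * l" "w \<noteq> []" "cmod \<tau> = 1"
    and "outcome_prob n l s is g > 0"
  obtains c where "cmod c = 1" "collapsed_state n l s is g = (\<lambda>v. c * ghz_vec w \<tau> v)"
proof -
  have "outcome_prob n l s is g = (cmod K)\<^sup>2"
    using sum_norm_ghz_vec[OF assms(2-4)]
    by (simp add: outcome_prob_def post norm_mult power_mult_distrib sum_distrib_left[symmetric])
  then have "K \<noteq> 0" and "sqrt (outcome_prob n l s is g) = cmod K"
    using assms(5) by auto
  then show ?thesis
    using that[of "K / complex_of_real (cmod K)"]
    by (simp add: collapsed_state_def post norm_divide)
qed

lemma same_state_collapsed_iff:
  assumes "drop l (False # is) = flip_if f (take l (False # is))"
    and "s = 1 \<or> s = -1" and "n * l > 0"
    and "g \<in> ghz_basis (n * l)" and "outcome_prob n l s is g > 0"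
  shows "same_state (collapsed_state n l s is g) g \<longleftrightarrow> complex_of_real s ^ n = 1"
proof -
  obtain w \<sigma> where g: "g = ghz_vec w \<sigma>" and w: "length w = n * l" "w \<noteq> []"
    and \<sigma>: "\<sigma> = 1 \<or> \<sigma> = -1"
    using ghz_basisE[OF assms(4,3)] .
  have "s * s = 1" using assms(2) by auto
  obtain K where "post_state n l s is g = (\<lambda>v. K * ghz_vec w (\<sigma> * complex_of_real s ^ n) v)"
    using post_state_ghz_vec_multiple[OF assms(1) \<open>s * s = 1\<close> w(1) \<sigma>] unfolding g .
  moreover have "cmod (\<sigma> * complex_of_real s ^ n) = 1"
    using \<sigma> assms(2) by (auto simp: norm_mult norm_power)
  ultimately obtain c where "cmod c = 1"
    and "collapsed_state n l s is g = (\<lambda>v. c * ghz_vec w (\<sigma> * complex_of_real s ^ n) v)"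
    using collapsed_state_of_multiple w assms(5) by blast
  then show ?thesis
    using same_state_phase_ghz_vec_iff[OF w(2)] \<sigma> g by auto
qed

theorem corollary2:
  fixes n l :: nat and s :: real and "is" :: "bool list"
  assumes "n \<ge> 2" and "l \<ge> 1" and "s = 1 \<or> s = -1"
    and "length is = 2 * l - 1"
    and "take l (False # is) = drop l (False # is) \<or>
         take l (False # is) = map Not (drop l (False # is))"
  shows "(s = 1 \<longrightarrow> (\<forall>g\<in>ghz_basis (n * l). outcome_prob n l s is g > 0 \<longrightarrow>
             same_state (collapsed_state n l s is g) g))
       \<and> (s = -1 \<longrightarrow> (\<forall>g\<in>ghz_basis (n * l). outcome_prob n l s is g > 0 \<longrightarrow>
             (same_state (collapsed_state n l s is g) g \<longleftrightarrow> even n)))"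
proof -
  obtain f where f: "drop l (False # is) = flip_if f (take l (False # is))"
    using assms(5) by (metis flip_if_def map_Not_map_Not)
  \<comment> \<open>The length of \<open>is\<close> is irrelevant: only the relation between the two halves matters.\<close>
  have "n * l > 0" using assms(1,2) by simp
  note collapse = same_state_collapsed_iff[OF f assms(3) this]
  have "((-1::complex) ^ n = 1) \<longleftrightarrow> even n"
    by (cases "even n") simp_all
  then show ?thesis using collapse by auto
qed

end
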